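(* Let $(E,\rho)$ be a weighted space and $(P(t))_{t\ge0}$ a generalized Feller semigroup on $\mathscr{B}^\rho(E)$, with associated measures $p(t)(x,\cdot)$. Let $\hat p(t)$ be the restriction of $p(t)$ to $E\times\mathcal{B}_0(E)$. Then for every $t\ge0$ and $A\in\mathcal{B}_0(E)$ the map $x\mapsto \hat p(t)(x,A)$ is $\mathcal{B}_0(E)$-measurable, and for all $s,t\ge0$, $x\in E$, $A\in\mathcal{B}_0(E)$, $$\int_E \hat p(s)(y,A)\,\hat p(t)(x,dy)=\hat p(s+t)(x,A),$$ i.e. $(\hat p(t))_{t\ge0}$ is a semigroup of transition kernels on $(E,\mathcal{B}_0(E))$.
   Context: A weighted space is a pair $(E,\rho)$ where $E$ is a completely regular Hausdorff topological space and $\rho:E\to(0,\infty)$ is an admissible weight function, meaning that for every $R\ge 0$ the sublevel set $K_R:=\{x\in E:\rho(x)\le R\}$ is compact. For $f:E\to\mathbb{R}$ put $\|f\|_\rho:=\sup_{x\in E}|f(x)|/\rho(x)$; $\mathscr{B}^\rho(E)$ denotes the closure of $C_b(E)$ with respect to $\|\cdot\|_\rho$ inside $\{f:E\to\mathbb{R}:\|f\|_\rho<\infty\}$. A generalized Feller semigroup on $\mathscr{B}^\rho(E)$ is a family $(P(t))_{t\ge0}$ of bounded linear operators on $\mathscr{B}^\rho(E)$ such that (P1) $P(0)=\mathrm{Id}$; (P2) $P(t+s)=P(s)P(t)$ for all $s,t\ge0$; (P3) $\lim_{t\downarrow0}P(t)f(x)=f(x)$ for all $f\in\mathscr{B}^\rho(E)$,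 $x\in E$; (P4) there exist $\varepsilon>0$, $C<\infty$ with $\|P(t)\|_{L(\mathscr{B}^\rho(E))}\le C$ for all $t\in[0,\varepsilon]$; (P5) each $P(t)$ is a positive operator. For each $t\ge 0$, $x\in E$ there is a unique positive finite Radon measure $p(t)(x,\cdot)$ on the Borel σ-algebra $\mathcal{B}(E)$ with $\int\rho\,dp(t)(x,\cdot)<\infty$ and $P(t)f(x)=\int_E f(y)\,p(t)(x,dy)$ for all $f\in\mathscr{B}^\rho(E)$. The Baire σ-algebra $\mathcal{B}_0(E)$ is the smallest σ-algebra on $E$ making all bounded continuous functions measurable. *)

theory Defs
  imports "HOL-Probability.Probability"
begin

definition Cb :: "('a::topological_space \<Rightarrow> real) set" where
  "Cb = {f. continuous_on UNIV f \<and> bounded (range f)}"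

definition admissible_weight :: "('a::topological_space \<Rightarrow> real) \<Rightarrow> bool" where
  "admissible_weight \<rho> \<longleftrightarrow> (\<forall>x. \<rho> x > 0) \<and> (\<forall>R\<ge>0. compact {x. \<rho> x \<le> R})"

definition weighted_space :: "('a::topological_space \<Rightarrow> real) \<Rightarrow> bool" where
  "weighted_space \<rho> \<longleftrightarrow> completely_regular_space (euclidean :: 'a topology)
      \<and> Hausdorff_space (euclidean :: 'a topology) \<and> admissible_weight \<rho>"

definition wfinite :: "('a \<Rightarrow> real) \<Rightarrow> ('a \<Rightarrow> real) \<Rightarrow> bool" where
  "wfinite \<rho> f \<longleftrightarrow> bdd_above (range (\<lambda>x. \<bar>f x\<bar> / \<rho> x))"

definition wnorm :: "('a \<Rightarrow> real) \<Rightarrow> ('a \<Rightarrow> real) \<Rightarrow> real" where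
  "wnorm \<rho> f = (SUP x. \<bar>f x\<bar> / \<rho> x)"

definition Brho :: "('a::topological_space \<Rightarrow> real) \<Rightarrow> ('a \<Rightarrow> real) set" where
  "Brho \<rho> = {f. wfinite \<rho> f \<and>
     (\<forall>e>0. \<exists>g\<in>Cb. wfinite \<rho> g \<and> wfinite \<rho> (\<lambda>x. f x - g x) \<and> wnorm \<rho> (\<lambda>x. f x - g x) \<le> e)}"

text \<open>Bounded linear operator on B^rho(E) (only its action on B^rho(E) matters).\<close>
definition bounded_linear_on_Brho ::
    "('a::topological_space \<Rightarrow> real) \<Rightarrow> (('a \<Rightarrow> real) \<Rightarrow> ('a \<Rightarrow> real)) \<Rightarrow> bool" where
  "bounded_linear_on_Brho \<rho> T \<longleftrightarrow>
     (\<forall>f\<in>Brho \<rho>. T f \<in> Brho \<rho>) \<and>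
     (\<forall>f\<in>Brho \<rho>. \<forall>g\<in>Brho \<rho>. \<forall>a b::real.
         T (\<lambda>x. a * f x + b * g x) = (\<lambda>x. a * T f x + b * T g x)) \<and>
     (\<exists>C. \<forall>f\<in>Brho \<rho>. wnorm \<rho> (T f) \<le> C * wnorm \<rho> f)"

definition gen_feller_semigroup ::
    "('a::topological_space \<Rightarrow> real) \<Rightarrow> (real \<Rightarrow> ('a \<Rightarrow> real) \<Rightarrow> ('a \<Rightarrow> real)) \<Rightarrow> bool" where
  "gen_feller_semigroup \<rho> P \<longleftrightarrow>
     (\<forall>t\<ge>0. bounded_linear_on_Brho \<rho> (P t)) \<and>
     (\<forall>f\<in>Brho \<rho>. P 0 f = f) \<and>
     (\<forall>s\<ge>0. \<forall>t\<ge>0. \<forall>f\<in>Brho \<rho>. P (t + s) f = P s (P t f)) \<and>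
     (\<forall>f\<in>Brho \<rho>. \<forall>x. ((\<lambda>t. P t f x) \<longlongrightarrow> f x) (at_right 0)) \<and>
     (\<exists>\<epsilon>>0. \<exists>C. \<forall>t\<in>{0..\<epsilon>}. \<forall>f\<in>Brho \<rho>. wnorm \<rho> (P t f) \<le> C * wnorm \<rho> f) \<and>
     (\<forall>t\<ge>0. \<forall>f\<in>Brho \<rho>. (\<forall>x. f x \<ge> 0) \<longrightarrow> (\<forall>x. P t f x \<ge> 0))"

definition inner_regular_compact :: "'a::topological_space measure \<Rightarrow> bool" where
  "inner_regular_compact M \<longleftrightarrow>
     (\<forall>B\<in>sets M. emeasure M B = (SUP K\<in>{K. compact K \<and> K \<subseteq> B}. emeasure M K))"

definition associated_measures ::
    "('a::topological_space \<Rightarrow> real) \<Rightarrow> (real \<Rightarrow> ('a \<Rightarrow> real) \<Rightarrow> ('a \<Rightarrow> real))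
      \<Rightarrow> (real \<Rightarrow> 'a \<Rightarrow> 'a measure) \<Rightarrow> bool" where
  "associated_measures \<rho> P p \<longleftrightarrow>
     (\<forall>t\<ge>0. \<forall>x. sets (p t x) = sets borel \<and> finite_measure (p t x)
        \<and> inner_regular_compact (p t x) \<and> integrable (p t x) \<rho>
        \<and> (\<forall>f\<in>Brho \<rho>. P t f x = (\<integral>y. f y \<partial>(p t x))))"

definition baire :: "'a::topological_space measure" where
  "baire = sigma UNIV {f -` B | f B. f \<in> Cb \<and> B \<in> sets (borel :: real measure)}"

definition restr_baire :: "'a::topological_space measure \<Rightarrow> 'a measure" where
  "restr_baire M = measure_of UNIV (sets baire) (emeasure M)"

end

theory Submission
  imports Defs
begin

text \<open>For a zero set \<open>Z = f -` {0}\<close> of a bounded continuous \<open>f\<close>, the bounded continuous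
  functions \<open>max 0 (1 - n \<bar>f\<bar>)\<close> decrease to the indicator of \<open>Z\<close>. By dominated convergence,
  \<open>p(t)(x, Z)\<close> is then the pointwise limit of \<open>P(t)\<close> applied to them, which gives
  Baire measurability in \<open>x\<close>, and the semigroup law of \<open>P\<close> passes to the limit as the
  Chapman--Kolmogorov equation for \<open>Z\<close>. Zero sets are closed under finite intersections and
  generate the Baire \<open>\<sigma>\<close>-algebra, so Dynkin's \<open>\<pi>\<close>-\<open>\<lambda>\<close> theorem extends both statements to all
  Baire sets, finiteness of the measures taking care of complements.\<close>

subsection \<open>Bounded continuous functions and the Baire \<open>\<sigma>\<close>-algebra\<close>

lemma CbI: "continuous_on UNIV h \<Longrightarrow> (\<And>x. \<bar>h x\<bar> \<le> M) \<Longrightarrow> h \<in> Cb"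
  unfolding Cb_def bounded_iff by auto

lemma Cb_continuous_on: "f \<in> Cb \<Longrightarrow> continuous_on UNIV f"
  unfolding Cb_def by blast

lemma Cb_bounded: "f \<in> Cb \<Longrightarrow> \<exists>M. \<forall>x. \<bar>f x\<bar> \<le> M"
  unfolding Cb_def by (auto simp: bounded_iff)

lemma Cb_borel_measurable: "f \<in> Cb \<Longrightarrow> f \<in> borel_measurable borel"
  by (rule borel_measurable_continuous_onI) (rule Cb_continuous_on)

lemma space_baire [simp]: "space baire = UNIV"
  unfolding baire_def by (simp add: space_measure_of_conv)

lemma sets_baire:
  "sets baire = sigma_sets UNIV {f -` B | f B. f \<in> Cb \<and> B \<in> sets (borel :: real measure)}"
  unfolding baire_def by (rule sets_measure_of) auto

lemma Cb_measurable_baire: "f \<in> Cb \<Longrightarrow> f \<in> borel_measurable baire"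
  unfolding measurable_def sets_baire by auto

lemma sets_baire_subset_borel: "sets baire \<subseteq> sets (borel :: 'a::topological_space measure)"
proof -
  have "{f -` B | f B. f \<in> Cb \<and> B \<in> sets (borel :: real measure)} \<subseteq> sets (borel :: 'a measure)"
    by (auto intro: measurable_sets_borel Cb_borel_measurable)
  from sets.sigma_sets_subset[OF this] show ?thesis
    unfolding sets_baire by simp
qed

lemma measurable_baire_imp_measurable:
  assumes "f \<in> borel_measurable baire" and "sets M = sets borel"
  shows "f \<in> borel_measurable M"
proof -
  have "space M = UNIV"
    using sets_eq_imp_space_eq[OF assms(2)] by simp
  then show ?thesis
    using measurable_sets[OF assms(1)] sets_baire_subset_borel assms(2)
    by (auto simp: measurable_def)
qed

definition Cb_zero_sets :: "'a::topological_space set set" where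
  "Cb_zero_sets = {f -` {0} | f. f \<in> Cb}"

lemma UNIV_in_Cb_zero_sets: "UNIV \<in> Cb_zero_sets"
proof -
  have "(\<lambda>_. 0::real) \<in> Cb" by (rule CbI[where M=0]) auto
  moreover have "UNIV = (\<lambda>_. 0::real) -` {0}" by simp
  ultimately show ?thesis
    unfolding Cb_zero_sets_def by blast
qed

lemma Int_stable_Cb_zero_sets: "Int_stable (Cb_zero_sets :: 'a::topological_space set set)"
proof (rule Int_stableI)
  fix a b :: "'a set" assume "a \<in> Cb_zero_sets" "b \<in> Cb_zero_sets"
  then obtain f g :: "'a \<Rightarrow> real" where f: "f \<in> Cb" "a = f -` {0}" and g: "g \<in> Cb" "b = g -` {0}"
    unfolding Cb_zero_sets_def by blast
  obtain M N where M: "\<And>x. \<bar>f x\<bar> \<le> M" and N: "\<And>x. \<bar>g x\<bar> \<le> N"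
    using Cb_bounded[OF f(1)] Cb_bounded[OF g(1)] by blast
  have "(\<lambda>x. \<bar>f x\<bar> + \<bar>g x\<bar>) \<in> Cb"
  proof (rule CbI[where M="M + N"])
    show "continuous_on UNIV (\<lambda>x. \<bar>f x\<bar> + \<bar>g x\<bar>)"
      by (intro continuous_intros Cb_continuous_on f(1) g(1))
    show "\<bar>\<bar>f x\<bar> + \<bar>g x\<bar>\<bar> \<le> M + N" for x
      using M[of x] N[of x] by simp
  qed
  moreover have "a \<inter> b = (\<lambda>x. \<bar>f x\<bar> + \<bar>g x\<bar>) -` {0}"
    unfolding f(2) g(2) by (auto simp: add_nonneg_eq_0_iff)
  ultimately show "a \<inter> b \<in> Cb_zero_sets"
    unfolding Cb_zero_sets_def by blast
qed

lemma sets_baire_eq_sigma_Cb_zero_sets: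
  "sets baire = sigma_sets UNIV (Cb_zero_sets :: 'a::topological_space set set)"
  unfolding sets_baire
proof (rule sigma_sets_eqI)
  fix b :: "'a set" assume "b \<in> Cb_zero_sets"
  then obtain f where f: "f \<in> Cb" "b = f -` {0}"
    unfolding Cb_zero_sets_def by blast
  have "b \<in> {f -` B | f B. f \<in> Cb \<and> B \<in> sets (borel :: real measure)}"
    unfolding f(2) by (rule CollectI, rule exI[of _ f], rule exI[of _ "{0}"]) (simp add: f(1))
  then show "b \<in> sigma_sets UNIV {f -` B | f B. f \<in> Cb \<and> B \<in> sets (borel :: real measure)}"
    by (rule sigma_sets.Basic)
next
  let ?Z = "sigma UNIV (Cb_zero_sets :: 'a set set)"
  have sets_Z: "sets ?Z = sigma_sets UNIV Cb_zero_sets"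
    by (rule sets_measure_of) simp
  fix a :: "'a set" assume "a \<in> {f -` B | f B. f \<in> Cb \<and> B \<in> sets (borel :: real measure)}"
  then obtain f :: "'a \<Rightarrow> real" and B where f: "f \<in> Cb" "B \<in> sets borel" "a = f -` B"
    by blast
  obtain M where M: "\<And>x. \<bar>f x\<bar> \<le> M"
    using Cb_bounded[OF f(1)] by blast
  have "{x. f x \<le> c} \<in> Cb_zero_sets" for c
  proof -
    have "(\<lambda>x. max (f x - c) 0) \<in> Cb"
    proof (rule CbI[where M="\<bar>M\<bar> + \<bar>c\<bar>"])
      show "continuous_on UNIV (\<lambda>x. max (f x - c) 0)"
        by (intro continuous_intros Cb_continuous_on f(1))
      show "\<bar>max (f x - c) 0\<bar> \<le> \<bar>M\<bar> + \<bar>c\<bar>" for x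
        using M[of x] by arith
    qed
    moreover have "{x. f x \<le> c} = (\<lambda>x. max (f x - c) 0) -` {0}"
      by (auto simp: max_def split: if_splits)
    ultimately show ?thesis
      unfolding Cb_zero_sets_def by blast
  qed
  then have "f \<in> borel_measurable ?Z"
    unfolding borel_measurable_iff_le sets_Z by (auto simp: space_measure_of_conv)
  from measurable_sets[OF this f(2)] show "a \<in> sigma_sets UNIV Cb_zero_sets"
    unfolding sets_Z f(3) by (simp add: space_measure_of_conv)
qed

lemma baire_induct [consumes 1, case_names basic empty compl union]:
  assumes "A \<in> sets baire"
    and "\<And>A. A \<in> Cb_zero_sets \<Longrightarrow> Q A"
    and "Q {}"
    and "\<And>A. A \<in> sets baire \<Longrightarrow> Q A \<Longrightarrow> Q (UNIV - A)"
    and "\<And>A. disjoint_family A \<Longrightarrow> range A \<subseteq> sets baire \<Longrightarrow> (\<And>i. Q (A i)) \<Longrightarrow> Q (\<Union>i::nat. A i)"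
  shows "Q A"
proof -
  have "Cb_zero_sets \<subseteq> Pow UNIV" by simp
  from Int_stable_Cb_zero_sets this assms(1)[unfolded sets_baire_eq_sigma_Cb_zero_sets]
  show ?thesis
  proof (induction rule: sigma_sets_induct_disjoint)
    case (basic A)
    then show ?case by (rule assms(2))
  next
    case empty
    show ?case by (rule assms(3))
  next
    case (compl A)
    then show ?case using assms(4) unfolding sets_baire_eq_sigma_Cb_zero_sets by blast
  next
    case (union A)
    then show ?case using assms(5) unfolding sets_baire_eq_sigma_Cb_zero_sets by blast
  qed
qed

definition zero_cutoff :: "('a \<Rightarrow> real) \<Rightarrow> nat \<Rightarrow> 'a \<Rightarrow> real" where
  "zero_cutoff f n = (\<lambda>y. max 0 (1 - real n * \<bar>f y\<bar>))"

lemma zero_cutoff_Cb: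
  assumes "f \<in> Cb"
  shows "zero_cutoff f n \<in> Cb"
proof (rule CbI[where M=1])
  show "continuous_on UNIV (zero_cutoff f n)"
    unfolding zero_cutoff_def by (intro continuous_intros Cb_continuous_on assms)
qed (auto simp: zero_cutoff_def)

lemma zero_cutoff_nonneg: "0 \<le> zero_cutoff f n y"
  and zero_cutoff_le_one: "zero_cutoff f n y \<le> 1"
  unfolding zero_cutoff_def by auto

lemma zero_cutoff_tendsto_indicator:
  "(\<lambda>n. zero_cutoff f n y) \<longlonglongrightarrow> indicator (f -` {0}) y"
proof (cases "f y = 0")
  case True
  then show ?thesis unfolding zero_cutoff_def by simp
next
  case False
  obtain N where N: "inverse \<bar>f y\<bar> < real N"
    using reals_Archimedean2 by blast
  have "zero_cutoff f n y = 0" if "N \<le> n" for n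
  proof -
    have "inverse \<bar>f y\<bar> < real n"
      using N that by (meson less_le_trans of_nat_le_iff)
    then have "1 < real n * \<bar>f y\<bar>"
      using False by (simp add: field_simps)
    then show ?thesis unfolding zero_cutoff_def by simp
  qed
  then have "(\<lambda>n. zero_cutoff f n y) \<longlonglongrightarrow> 0"
    by (intro tendsto_eventually) (auto simp: eventually_sequentially)
  then show ?thesis
    using False by simp
qed

subsection \<open>Weighted spaces\<close>

lemma weighted_space_pos: "weighted_space \<rho> \<Longrightarrow> \<rho> x > 0"
  unfolding weighted_space_def admissible_weight_def by blast

text \<open>The sublevel sets \<open>{\<rho> \<le> 1/(n+1)}\<close> are compact, hence closed, so their complements form an
  open cover of the compact set \<open>{\<rho> \<le> 1}\<close>.\<close>
lemma weighted_space_bounded_below: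
  assumes "weighted_space \<rho>"
  shows "\<exists>c>0. \<forall>x. c \<le> \<rho> x"
proof -
  have H: "Hausdorff_space (euclidean :: 'a topology)"
    and cpt: "\<And>R. R \<ge> 0 \<Longrightarrow> compact {x. \<rho> x \<le> R}"
    using assms unfolding weighted_space_def admissible_weight_def by auto
  have closed: "closed {x. \<rho> x \<le> R}" if "R \<ge> 0" for R
    unfolding closed_closedin
    by (rule compactin_imp_closedin[OF H]) (simp only: compactin_euclidean_iff cpt[OF that])
  define U where "U n = - {x. \<rho> x \<le> 1 / real (Suc n)}" for n
  have cover: "{x. \<rho> x \<le> 1} \<subseteq> (\<Union>n. U n)"
  proof
    fix x
    obtain n where "inverse (real (Suc n)) < \<rho> x"
      using reals_Archimedean weighted_space_pos[OF assms] by blast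
    then show "x \<in> (\<Union>n. U n)"
      unfolding U_def by (auto simp: divide_inverse not_le)
  qed
  have open_U: "open (U n)" for n
    unfolding U_def using closed by (intro open_Compl) simp
  obtain C where C: "finite C" "{x. \<rho> x \<le> 1} \<subseteq> (\<Union>n\<in>C. U n)"
    by (rule compactE_image[OF cpt[of 1], of UNIV U]) (use cover open_U in auto)
  obtain k where k: "C \<subseteq> {..<k}"
    using finite_nat_bounded[OF C(1)] by blast
  have "1 / real (Suc k) \<le> \<rho> x" for x
  proof (cases "\<rho> x \<le> 1")
    case True
    then obtain n where "n \<in> C" "x \<in> U n"
      using C(2) by auto
    then have "n < k" "1 / real (Suc n) < \<rho> x"
      using k unfolding U_def by auto
    moreover have "1 / real (Suc k) \<le> 1 / real (Suc n)"
      using \<open>n < k\<close> by (intro divide_left_mono) auto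
    ultimately show ?thesis by linarith
  next
    case False
    moreover have "1 / real (Suc k) \<le> 1" by simp
    ultimately show ?thesis by linarith
  qed
  then show ?thesis by (intro exI[of _ "1 / real (Suc k)"]) auto
qed

lemma Cb_subset_Brho:
  fixes \<rho> :: "'a::topological_space \<Rightarrow> real"
  assumes "weighted_space \<rho>"
  shows "Cb \<subseteq> Brho \<rho>"
proof
  fix f :: "'a \<Rightarrow> real" assume f: "f \<in> Cb"
  obtain c where c: "c > 0" "\<And>x. c \<le> \<rho> x"
    using weighted_space_bounded_below[OF assms] by blast
  obtain M where M: "\<And>x. \<bar>f x\<bar> \<le> M"
    using Cb_bounded[OF f] by blast
  have "\<bar>f x\<bar> / \<rho> x \<le> M / c" for x
  proof -
    have "\<bar>f x\<bar> / \<rho> x \<le> M / \<rho> x"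
      using M c(1) c(2)[of x] by (intro divide_right_mono) auto
    also have "\<dots> \<le> M / c"
      using M[of x] c by (intro divide_left_mono) (auto intro: mult_pos_pos order.strict_trans2)
    finally show ?thesis .
  qed
  then have "wfinite \<rho> f"
    unfolding wfinite_def by (intro bdd_aboveI[where M="M / c"]) auto
  moreover have "wfinite \<rho> (\<lambda>x. f x - f x)" "wnorm \<rho> (\<lambda>x. f x - f x) = 0"
    by (auto simp: wfinite_def wnorm_def)
  ultimately show "f \<in> Brho \<rho>"
    unfolding Brho_def using f by force
qed

lemma abs_le_wnorm_mult:
  assumes "wfinite \<rho> f" and "\<rho> x > 0"
  shows "\<bar>f x\<bar> \<le> wnorm \<rho> f * \<rho> x"
proof -
  have "\<bar>f x\<bar> / \<rho> x \<le> wnorm \<rho> f"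
    using cSUP_upper[of x UNIV "\<lambda>x. \<bar>f x\<bar> / \<rho> x"] assms(1)
    unfolding wfinite_def wnorm_def by simp
  then show ?thesis
    using assms(2) by (simp add: pos_divide_le_eq)
qed

lemma Brho_pointwise_limit_of_Cb:
  assumes "weighted_space \<rho>" and "f \<in> Brho \<rho>"
  obtains g where "\<And>n. g n \<in> Cb" and "\<And>x. (\<lambda>n. g n x) \<longlonglongrightarrow> f x"
proof -
  have "\<forall>n. \<exists>g\<in>Cb. wfinite \<rho> g \<and> wfinite \<rho> (\<lambda>x. f x - g x) \<and> wnorm \<rho> (\<lambda>x. f x - g x) \<le> 1 / real (Suc n)"
    using assms(2) unfolding Brho_def by auto
  then obtain g where g: "\<And>n. g n \<in> Cb" "\<And>n. wfinite \<rho> (\<lambda>x. f x - g n x)"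
    "\<And>n. wnorm \<rho> (\<lambda>x. f x - g n x) \<le> 1 / real (Suc n)"
    by metis
  show ?thesis
  proof (rule that[OF g(1)])
    fix x
    have pos: "\<rho> x > 0" by (rule weighted_space_pos[OF assms(1)])
    have "norm (f x - g n x) \<le> \<rho> x * inverse (real (Suc n))" for n
    proof -
      have "\<bar>f x - g n x\<bar> \<le> wnorm \<rho> (\<lambda>x. f x - g n x) * \<rho> x"
        using abs_le_wnorm_mult[OF g(2) pos] .
      also have "\<dots> \<le> \<rho> x * inverse (real (Suc n))"
        using g(3)[of n] pos by (simp add: divide_inverse mult.commute)
      finally show ?thesis by simp
    qed
    then have "\<forall>\<^sub>F n in sequentially. norm (f x - g n x) \<le> \<rho> x * inverse (real (Suc n))"
      by (intro always_eventually allI)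
    moreover have "(\<lambda>n. \<rho> x * inverse (real (Suc n))) \<longlonglongrightarrow> 0"
      using tendsto_mult[OF tendsto_const LIMSEQ_inverse_real_of_nat, of "\<rho> x"] by simp
    ultimately have "(\<lambda>n. f x - g n x) \<longlonglongrightarrow> 0"
      by (rule Lim_null_comparison)
    from tendsto_diff[OF tendsto_const[of "f x"] this] show "(\<lambda>n. g n x) \<longlonglongrightarrow> f x"
      by simp
  qed
qed

lemma Brho_measurable_baire:
  assumes "weighted_space \<rho>" and "f \<in> Brho \<rho>"
  shows "f \<in> borel_measurable baire"
proof -
  obtain g where g: "\<And>n. g n \<in> Cb" "\<And>x. (\<lambda>n. g n x) \<longlonglongrightarrow> f x"
    using Brho_pointwise_limit_of_Cb[OF assms] by metis
  show ?thesis
    by (rule borel_measurable_LIMSEQ_real[where u=g]) (use g Cb_measurable_baire in auto)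
qed

lemma Brho_integrable:
  assumes "weighted_space \<rho>" and "f \<in> Brho \<rho>"
    and "sets M = sets borel" and "integrable M \<rho>"
  shows "integrable M f"
proof (rule Bochner_Integration.integrable_bound)
  have wf: "wfinite \<rho> f"
    using assms(2) unfolding Brho_def by auto
  show "integrable M (\<lambda>x. wnorm \<rho> f * \<rho> x)"
    using assms(4) by simp
  show "f \<in> borel_measurable M"
    by (rule measurable_baire_imp_measurable[OF Brho_measurable_baire[OF assms(1,2)] assms(3)])
  show "AE x in M. norm (f x) \<le> norm (wnorm \<rho> f * \<rho> x)"
  proof (rule AE_I2)
    fix x
    have pos: "\<rho> x > 0" by (rule weighted_space_pos[OF assms(1)])
    have "\<bar>f x\<bar> \<le> wnorm \<rho> f * \<rho> x"
      by (rule abs_le_wnorm_mult[OF wf pos])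
    then show "norm (f x) \<le> norm (wnorm \<rho> f * \<rho> x)"
      by simp
  qed
qed

subsection \<open>Semigroups represented by finite Borel kernels\<close>

locale integral_kernel_semigroup =
  fixes F :: "('a::topological_space \<Rightarrow> real) set"
    and P :: "real \<Rightarrow> ('a \<Rightarrow> real) \<Rightarrow> ('a \<Rightarrow> real)"
    and p :: "real \<Rightarrow> 'a \<Rightarrow> 'a measure"
  assumes Cb_subset: "Cb \<subseteq> F"
    and F_measurable_baire: "f \<in> F \<Longrightarrow> f \<in> borel_measurable baire"
    and P_closed: "t \<ge> 0 \<Longrightarrow> f \<in> F \<Longrightarrow> P t f \<in> F"
    and P_add: "s \<ge> 0 \<Longrightarrow> t \<ge> 0 \<Longrightarrow> f \<in> F \<Longrightarrow> P (s + t) f = P t (P s f)"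
    and sets_p: "t \<ge> 0 \<Longrightarrow> sets (p t x) = sets borel"
    and finite_measure_p: "t \<ge> 0 \<Longrightarrow> finite_measure (p t x)"
    and integrable_p: "t \<ge> 0 \<Longrightarrow> f \<in> F \<Longrightarrow> integrable (p t x) f"
    and P_eq_integral: "t \<ge> 0 \<Longrightarrow> f \<in> F \<Longrightarrow> P t f x = (\<integral>y. f y \<partial>p t x)"
begin

lemma space_p: "t \<ge> 0 \<Longrightarrow> space (p t x) = UNIV"
  using sets_eq_imp_space_eq[OF sets_p] by simp

lemma measurable_baire_imp_measurable_p:
  "t \<ge> 0 \<Longrightarrow> f \<in> borel_measurable baire \<Longrightarrow> f \<in> borel_measurable (p t x)"
  using measurable_baire_imp_measurable sets_p by blast

lemma sets_baire_subset_sets_p: "t \<ge> 0 \<Longrightarrow> A \<in> sets baire \<Longrightarrow> A \<in> sets (p t x)"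
  using sets_baire_subset_borel sets_p by blast

lemma emeasure_p_eq_measure: "t \<ge> 0 \<Longrightarrow> emeasure (p t x) A = ennreal (measure (p t x) A)"
  using finite_measure.emeasure_eq_measure[OF finite_measure_p] .

lemma emeasure_p_Compl:
  assumes "t \<ge> 0" and "A \<in> sets baire"
  shows "emeasure (p t x) (UNIV - A) = emeasure (p t x) UNIV - emeasure (p t x) A"
proof -
  interpret finite_measure "p t x" by (rule finite_measure_p[OF assms(1)])
  show ?thesis
    using emeasure_compl[of A "p t x"] sets_baire_subset_sets_p[OF assms, of x] space_p[OF assms(1)]
    by (simp add: emeasure_finite)
qed

lemma emeasure_p_UN:
  assumes "t \<ge> 0" and "disjoint_family A" and "range A \<subseteq> sets baire"
  shows "emeasure (p t x) (\<Union>i. A i) = (\<Sum>i. emeasure (p t x) (A i))"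
  using assms sets_baire_subset_sets_p[OF assms(1)] by (intro suminf_emeasure[symmetric]) auto

lemma zero_cutoff_in_F: "f \<in> Cb \<Longrightarrow> zero_cutoff f n \<in> F"
  using Cb_subset zero_cutoff_Cb by blast

lemma P_zero_cutoff_tendsto:
  assumes t: "t \<ge> 0" and f: "f \<in> Cb"
  shows "(\<lambda>n. P t (zero_cutoff f n) x) \<longlonglongrightarrow> measure (p t x) (f -` {0})"
proof -
  interpret finite_measure "p t x" by (rule finite_measure_p[OF t])
  have Z: "f -` {0} \<in> sets (p t x)"
    using measurable_sets_borel[OF Cb_borel_measurable[OF f], of "{0}"] sets_p[OF t] by simp
  have "(\<lambda>n. \<integral>y. zero_cutoff f n y \<partial>p t x) \<longlonglongrightarrow> (\<integral>y. indicator (f -` {0}) y \<partial>p t x)"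
  proof (rule integral_dominated_convergence[where w="\<lambda>_. 1"])
    show "zero_cutoff f n \<in> borel_measurable (p t x)" for n
      by (rule measurable_baire_imp_measurable_p[OF t Cb_measurable_baire[OF zero_cutoff_Cb[OF f]]])
    show "AE y in p t x. (\<lambda>n. zero_cutoff f n y) \<longlonglongrightarrow> indicator (f -` {0}) y"
      by (intro AE_I2 zero_cutoff_tendsto_indicator)
    show "AE y in p t x. norm (zero_cutoff f n y) \<le> 1" for n
      using zero_cutoff_nonneg[of f n] zero_cutoff_le_one[of f n] by simp
  qed (use Z in auto)
  then show ?thesis
    using P_eq_integral[OF t zero_cutoff_in_F[OF f]] space_p[OF t] by simp
qed

lemma measure_Cb_zero_set_measurable:
  assumes "t \<ge> 0" and "f \<in> Cb"
  shows "(\<lambda>x. measure (p t x) (f -` {0})) \<in> borel_measurable baire"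
  by (rule borel_measurable_LIMSEQ_real[OF P_zero_cutoff_tendsto[OF assms]])
    (intro F_measurable_baire P_closed zero_cutoff_in_F assms)

text \<open>The dominating function is \<open>y \<mapsto> P(s) 1 y = p(s)(y, E)\<close>.\<close>
lemma integral_measure_Cb_zero_set:
  assumes s: "s \<ge> 0" and t: "t \<ge> 0" and f: "f \<in> Cb"
  shows "integrable (p t x) (\<lambda>y. measure (p s y) (f -` {0}))"
    and "(\<integral>y. measure (p s y) (f -` {0}) \<partial>p t x) = measure (p (s + t) x) (f -` {0})"
proof -
  let ?Z = "f -` {0}" and ?h = "\<lambda>n. P s (zero_cutoff f n)"
  have "(\<lambda>_::'a. 1::real) \<in> Cb"
    by (rule CbI[where M=1]) auto
  then have one: "(\<lambda>_. 1) \<in> F"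
    using Cb_subset by blast
  have measurable: "(\<lambda>y. measure (p s y) ?Z) \<in> borel_measurable (p t x)"
    by (rule measurable_baire_imp_measurable_p[OF t measure_Cb_zero_set_measurable[OF s f]])
  have h_measurable: "?h n \<in> borel_measurable (p t x)" for n
    by (intro measurable_baire_imp_measurable_p F_measurable_baire P_closed zero_cutoff_in_F s t f)
  have dominating: "integrable (p t x) (P s (\<lambda>_. 1))"
    by (intro integrable_p P_closed s t one)
  have lim: "AE y in p t x. (\<lambda>n. ?h n y) \<longlonglongrightarrow> measure (p s y) ?Z"
    by (intro AE_I2 P_zero_cutoff_tendsto s f)
  have bound: "AE y in p t x. norm (?h n y) \<le> P s (\<lambda>_. 1) y" for n
  proof (rule AE_I2)
    fix y
    interpret finite_measure "p s y" by (rule finite_measure_p[OF s])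
    have "0 \<le> (\<integral>z. zero_cutoff f n z \<partial>p s y)"
      by (intro integral_nonneg_AE AE_I2 zero_cutoff_nonneg)
    moreover have "(\<integral>z. zero_cutoff f n z \<partial>p s y) \<le> (\<integral>z. 1 \<partial>p s y)"
      by (intro integral_mono integrable_p zero_cutoff_in_F one s f) (simp_all add: zero_cutoff_le_one)
    ultimately show "norm (?h n y) \<le> P s (\<lambda>_. 1) y"
      using P_eq_integral[OF s zero_cutoff_in_F[OF f]] P_eq_integral[OF s one] by simp
  qed
  show "integrable (p t x) (\<lambda>y. measure (p s y) ?Z)"
    by (rule integrable_dominated_convergence[OF measurable h_measurable dominating lim bound])
  have "(\<lambda>n. \<integral>y. ?h n y \<partial>p t x) \<longlonglongrightarrow> (\<integral>y. measure (p s y) ?Z \<partial>p t x)"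
    by (rule integral_dominated_convergence[OF measurable h_measurable dominating lim bound])
  moreover have "(\<integral>y. ?h n y \<partial>p t x) = P (s + t) (zero_cutoff f n) x" for n
    using P_eq_integral[OF t P_closed[OF s zero_cutoff_in_F[OF f]]] P_add[OF s t zero_cutoff_in_F[OF f]]
    by simp
  ultimately have "(\<lambda>n. P (s + t) (zero_cutoff f n) x) \<longlonglongrightarrow> (\<integral>y. measure (p s y) ?Z \<partial>p t x)"
    by simp
  moreover have "(\<lambda>n. P (s + t) (zero_cutoff f n) x) \<longlonglongrightarrow> measure (p (s + t) x) ?Z"
    using s t by (intro P_zero_cutoff_tendsto f) simp
  ultimately show "(\<integral>y. measure (p s y) ?Z \<partial>p t x) = measure (p (s + t) x) ?Z"
    by (rule LIMSEQ_unique)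
qed

lemma emeasure_Cb_zero_set_measurable:
  assumes "t \<ge> 0" and "A \<in> Cb_zero_sets"
  shows "(\<lambda>x. emeasure (p t x) A) \<in> borel_measurable baire"
proof -
  obtain f where "f \<in> Cb" "A = f -` {0}"
    using assms(2) unfolding Cb_zero_sets_def by blast
  then show ?thesis
    using measurable_compose[OF measure_Cb_zero_set_measurable measurable_ennreal]
      emeasure_p_eq_measure[OF assms(1)] assms(1) by simp
qed

lemma nn_integral_emeasure_Cb_zero_set:
  assumes s: "s \<ge> 0" and t: "t \<ge> 0" and A: "A \<in> Cb_zero_sets"
  shows "(\<integral>\<^sup>+y. emeasure (p s y) A \<partial>p t x) = emeasure (p (s + t) x) A"
proof -
  obtain f where f: "f \<in> Cb" "A = f -` {0}"
    using A unfolding Cb_zero_sets_def by blast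
  have "(\<integral>\<^sup>+y. emeasure (p s y) A \<partial>p t x) = (\<integral>\<^sup>+y. ennreal (measure (p s y) A) \<partial>p t x)"
    using emeasure_p_eq_measure[OF s] by simp
  also have "\<dots> = ennreal (\<integral>y. measure (p s y) A \<partial>p t x)"
    unfolding f(2) by (intro nn_integral_eq_integral integral_measure_Cb_zero_set s t f AE_I2) simp
  also have "\<dots> = emeasure (p (s + t) x) A"
    unfolding f(2) integral_measure_Cb_zero_set[OF s t f(1)]
    using emeasure_p_eq_measure s t by simp
  finally show ?thesis .
qed

lemma emeasure_baire_measurable:
  assumes t: "t \<ge> 0" and A: "A \<in> sets baire"
  shows "(\<lambda>x. emeasure (p t x) A) \<in> borel_measurable baire"
  using A
proof (induction rule: baire_induct)
  case (basic A)
  then show ?case by (rule emeasure_Cb_zero_set_measurable[OF t])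
next
  case empty
  then show ?case by simp
next
  case (compl A)
  have [measurable]: "(\<lambda>x. emeasure (p t x) UNIV) \<in> borel_measurable baire"
    by (rule emeasure_Cb_zero_set_measurable[OF t UNIV_in_Cb_zero_sets])
  note compl.IH [measurable]
  have "(\<lambda>x. emeasure (p t x) UNIV - emeasure (p t x) A) \<in> borel_measurable baire"
    by measurable
  then show ?case
    using emeasure_p_Compl[OF t compl.hyps] by simp
next
  case (union A)
  have "(\<lambda>x. \<Sum>i. emeasure (p t x) (A i)) \<in> borel_measurable baire"
    by (rule borel_measurable_suminf_order) (rule union.IH)
  then show ?case
    using emeasure_p_UN[OF t union.hyps] by simp
qed

lemma chapman_kolmogorov_baire:
  assumes s: "s \<ge> 0" and t: "t \<ge> 0" and A: "A \<in> sets baire"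
  shows "(\<integral>\<^sup>+y. emeasure (p s y) A \<partial>p t x) = emeasure (p (s + t) x) A"
  using A
proof (induction rule: baire_induct)
  case (basic A)
  then show ?case by (rule nn_integral_emeasure_Cb_zero_set[OF s t])
next
  case empty
  then show ?case by simp
next
  case (compl A)
  have st: "s + t \<ge> 0" using s t by simp
  have UNIV: "UNIV \<in> sets baire"
    using sets.top[of baire] by simp
  have measurable: "(\<lambda>y. emeasure (p s y) B) \<in> borel_measurable (p t x)" if "B \<in> sets baire" for B
    by (intro measurable_baire_imp_measurable_p emeasure_baire_measurable s t that)
  have finite: "(\<integral>\<^sup>+y. emeasure (p s y) A \<partial>p t x) \<noteq> \<infinity>"
    using finite_measure.emeasure_finite[OF finite_measure_p[OF st]] compl.IH by simp
  have "(\<integral>\<^sup>+y. emeasure (p s y) (UNIV - A) \<partial>p t x)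
      = (\<integral>\<^sup>+y. emeasure (p s y) UNIV - emeasure (p s y) A \<partial>p t x)"
    using emeasure_p_Compl[OF s compl.hyps] by simp
  also have "\<dots> = (\<integral>\<^sup>+y. emeasure (p s y) UNIV \<partial>p t x) - (\<integral>\<^sup>+y. emeasure (p s y) A \<partial>p t x)"
    by (intro nn_integral_diff measurable compl.hyps UNIV finite AE_I2 emeasure_mono)
      (simp_all add: sets_baire_subset_sets_p[OF s UNIV])
  also have "\<dots> = emeasure (p (s + t) x) (UNIV - A)"
    using nn_integral_emeasure_Cb_zero_set[OF s t UNIV_in_Cb_zero_sets] compl.IH
      emeasure_p_Compl[OF st compl.hyps] by simp
  finally show ?case .
next
  case (union A)
  have "(\<integral>\<^sup>+y. emeasure (p s y) (\<Union>i. A i) \<partial>p t x) = (\<integral>\<^sup>+y. (\<Sum>i. emeasure (p s y) (A i)) \<partial>p t x)"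
    using emeasure_p_UN[OF s union.hyps] by simp
  also have "\<dots> = (\<Sum>i. \<integral>\<^sup>+y. emeasure (p s y) (A i) \<partial>p t x)"
    using union.hyps by (intro nn_integral_suminf measurable_baire_imp_measurable_p emeasure_baire_measurable s t) auto
  also have "\<dots> = emeasure (p (s + t) x) (\<Union>i. A i)"
    using emeasure_p_UN[OF _ union.hyps, of "s + t"] union.IH s t by simp
  finally show ?case .
qed

end

subsection \<open>Generalized Feller semigroups\<close>

lemma gen_feller_integral_kernel_semigroup:
  fixes \<rho> :: "'a::topological_space \<Rightarrow> real"
  assumes ws: "weighted_space \<rho>"
    and gf: "gen_feller_semigroup \<rho> P"
    and am: "associated_measures \<rho> P p"
  shows "integral_kernel_semigroup (Brho \<rho>) P p"
proof -
  have bounded_linear: "\<forall>t\<ge>0. bounded_linear_on_Brho \<rho> (P t)"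
    using gf unfolding gen_feller_semigroup_def by (elim conjE)
  have semigroup: "\<forall>s\<ge>0. \<forall>t\<ge>0. \<forall>f\<in>Brho \<rho>. P (t + s) f = P s (P t f)"
    using gf unfolding gen_feller_semigroup_def by (elim conjE)
  have kernel: "\<forall>t\<ge>0. \<forall>x. sets (p t x) = sets borel \<and> finite_measure (p t x)
      \<and> inner_regular_compact (p t x) \<and> integrable (p t x) \<rho>
      \<and> (\<forall>f\<in>Brho \<rho>. P t f x = (\<integral>y. f y \<partial>p t x))"
    using am unfolding associated_measures_def .
  show ?thesis
  proof (rule integral_kernel_semigroup.intro)
    show "Cb \<subseteq> Brho \<rho>"
      by (rule Cb_subset_Brho[OF ws])
    show "f \<in> borel_measurable baire" if "f \<in> Brho \<rho>" for f
      by (rule Brho_measurable_baire[OF ws that])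
    show "P t f \<in> Brho \<rho>" if "t \<ge> 0" "f \<in> Brho \<rho>" for t f
      using bounded_linear that unfolding bounded_linear_on_Brho_def by simp
    show "P (s + t) f = P t (P s f)" if "s \<ge> 0" "t \<ge> 0" "f \<in> Brho \<rho>" for s t f
      using semigroup that by simp
    show "sets (p t x) = sets borel" if "t \<ge> 0" for t x
      using kernel that by simp
    show "finite_measure (p t x)" if "t \<ge> 0" for t x
      using kernel that by simp
    show "integrable (p t x) f" if "t \<ge> 0" "f \<in> Brho \<rho>" for t x f
      using Brho_integrable[OF ws that(2)] kernel that(1) by simp
    show "P t f x = (\<integral>y. f y \<partial>p t x)" if "t \<ge> 0" "f \<in> Brho \<rho>" for t x f
      using kernel that by simp
  qed
qed

lemma subalgebra_baire: "sets M = sets borel \<Longrightarrow> subalgebra M baire"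
  unfolding subalgebra_def using sets_eq_imp_space_eq[of M borel] sets_baire_subset_borel by simp

lemma restr_baire_eq_restr_to_subalg:
  "sets M = sets borel \<Longrightarrow> restr_baire M = restr_to_subalg M baire"
  unfolding restr_baire_def restr_to_subalg_def using sets_eq_imp_space_eq[of M borel] by simp

lemma emeasure_restr_baire:
  "sets M = sets borel \<Longrightarrow> A \<in> sets baire \<Longrightarrow> emeasure (restr_baire M) A = emeasure M A"
  using emeasure_restr_to_subalg subalgebra_baire restr_baire_eq_restr_to_subalg by metis

lemma nn_integral_restr_baire:
  "sets M = sets borel \<Longrightarrow> f \<in> borel_measurable baire \<Longrightarrow>
    (\<integral>\<^sup>+x. f x \<partial>restr_baire M) = (\<integral>\<^sup>+x. f x \<partial>M)"
  using nn_integral_subalgebra2 subalgebra_baire restr_baire_eq_restr_to_subalg by metis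

theorem mainTheorem4:
  fixes \<rho> :: "'a::topological_space \<Rightarrow> real"
    and P :: "real \<Rightarrow> ('a \<Rightarrow> real) \<Rightarrow> ('a \<Rightarrow> real)"
    and p :: "real \<Rightarrow> 'a \<Rightarrow> 'a measure"
  assumes "weighted_space \<rho>"
    and "gen_feller_semigroup \<rho> P"
    and "associated_measures \<rho> P p"
  shows "(\<forall>t\<ge>0. \<forall>A\<in>sets baire.
            (\<lambda>x. emeasure (restr_baire (p t x)) A) \<in> borel_measurable baire)
       \<and> (\<forall>s\<ge>0. \<forall>t\<ge>0. \<forall>x. \<forall>A\<in>sets baire.
            (\<integral>\<^sup>+ y. emeasure (restr_baire (p s y)) A \<partial>(restr_baire (p t x)))
              = emeasure (restr_baire (p (s + t) x)) A)"
proof -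
  interpret integral_kernel_semigroup "Brho \<rho>" P p
    by (rule gen_feller_integral_kernel_semigroup[OF assms])
  have restr: "emeasure (restr_baire (p t x)) A = emeasure (p t x) A"
    if "t \<ge> 0" "A \<in> sets baire" for t x A
    by (rule emeasure_restr_baire[OF sets_p that(2)]) (rule that(1))
  have "(\<integral>\<^sup>+ y. emeasure (restr_baire (p s y)) A \<partial>restr_baire (p t x))
      = emeasure (restr_baire (p (s + t) x)) A"
    if "s \<ge> 0" "t \<ge> 0" "A \<in> sets baire" for s t x A
    using that restr nn_integral_restr_baire[OF sets_p emeasure_baire_measurable]
      chapman_kolmogorov_baire by simp
  then show ?thesis
    using restr emeasure_baire_measurable by simp
qed

end
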